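(* Let $A$ be a finite skew brace such that $\Lambda(A)$ has exactly one vertex. Then $A^3=\{0\}$ (so $A$ is left nilpotent of class two), $\operatorname{Fix}(A)$ is an ideal of index $2$ in $A$, and $A^2=\operatorname{Fix}(A)$.
   Context: A skew brace is a triple $(A,+,\circ)$ where $(A,+)$ and $(A,\circ)$ are groups with $a\circ(b+c)=a\circ b-a+a\circ c$. $\lambda_a(b)=-a+a\circ b$, $a*b=\lambda_a(b)-b$; for subsets $X,Y$, $X*Y$ is the additive subgroup generated by all $x*y$; $A^1=A$, $A^{n+1}=A*A^n$. $\operatorname{Fix}(A)=\{a\in A:\lambda_x(a)=a\ \forall x\in A\}$. An ideal is a subset $I$ that is a normal subgroup of both $(A,+)$ and $(A,\circ)$ with $\lambda_a(I)\subseteq I$ for all $a$. $\Lambda(A)$ is the graph whose vertices are the $\lambda$-orbits of size $>1$, two distinct vertices $L_1,L_2$ adjacent iff $\gcd(|L_1|,|L_2|)\ne1$. *)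

theory Defs
  imports "HOL-Algebra.Algebra"
begin

text \<open>A skew brace is given by two group structures P (the additive group (A,+),
written multiplicatively in HOL-Algebra, so mult P = +, one P = 0, inv P = -)
and M (the group (A,\<circ>)) on the same carrier.\<close>

definition skew_brace :: "('a, 'b) monoid_scheme \<Rightarrow> ('a, 'c) monoid_scheme \<Rightarrow> bool" where
  "skew_brace P M \<longleftrightarrow> group P \<and> group M \<and> carrier P = carrier M \<and>
     (\<forall>a\<in>carrier P. \<forall>b\<in>carrier P. \<forall>c\<in>carrier P.
        a \<otimes>\<^bsub>M\<^esub> (b \<otimes>\<^bsub>P\<^esub> c)
          = ((a \<otimes>\<^bsub>M\<^esub> b) \<otimes>\<^bsub>P\<^esub> inv\<^bsub>P\<^esub> a) \<otimes>\<^bsub>P\<^esub> (a \<otimes>\<^bsub>M\<^esub> c))"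

definition brace_lambda :: "('a, 'b) monoid_scheme \<Rightarrow> ('a, 'c) monoid_scheme \<Rightarrow> 'a \<Rightarrow> 'a \<Rightarrow> 'a" where
  "brace_lambda P M a b = inv\<^bsub>P\<^esub> a \<otimes>\<^bsub>P\<^esub> (a \<otimes>\<^bsub>M\<^esub> b)"

definition brace_star :: "('a, 'b) monoid_scheme \<Rightarrow> ('a, 'c) monoid_scheme \<Rightarrow> 'a \<Rightarrow> 'a \<Rightarrow> 'a" where
  "brace_star P M a b = brace_lambda P M a b \<otimes>\<^bsub>P\<^esub> inv\<^bsub>P\<^esub> b"

definition brace_star_set :: "('a, 'b) monoid_scheme \<Rightarrow> ('a, 'c) monoid_scheme \<Rightarrow> 'a set \<Rightarrow> 'a set \<Rightarrow> 'a set" where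
  "brace_star_set P M S T = generate P ((\<lambda>(x, y). brace_star P M x y) ` (S \<times> T))"

text \<open>brace_pow P M n = A^n for n \<ge> 1 (A^1 = A, A^(n+1) = A * A^n); the value at 0 is
  set to A as well and is irrelevant.\<close>
fun brace_pow :: "('a, 'b) monoid_scheme \<Rightarrow> ('a, 'c) monoid_scheme \<Rightarrow> nat \<Rightarrow> 'a set" where
  "brace_pow P M 0 = carrier P"
| "brace_pow P M (Suc 0) = carrier P"
| "brace_pow P M (Suc (Suc n)) = brace_star_set P M (carrier P) (brace_pow P M (Suc n))"

definition brace_Fix :: "('a, 'b) monoid_scheme \<Rightarrow> ('a, 'c) monoid_scheme \<Rightarrow> 'a set" where
  "brace_Fix P M = {a \<in> carrier P. \<forall>x\<in>carrier P. brace_lambda P M x a = a}"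

definition brace_ideal :: "'a set \<Rightarrow> ('a, 'b) monoid_scheme \<Rightarrow> ('a, 'c) monoid_scheme \<Rightarrow> bool" where
  "brace_ideal I P M \<longleftrightarrow> I \<lhd> P \<and> I \<lhd> M \<and>
     (\<forall>a\<in>carrier P. brace_lambda P M a ` I \<subseteq> I)"

definition lambda_orbit :: "('a, 'b) monoid_scheme \<Rightarrow> ('a, 'c) monoid_scheme \<Rightarrow> 'a \<Rightarrow> 'a set" where
  "lambda_orbit P M b = (\<lambda>a. brace_lambda P M a b) ` carrier P"

definition Lambda_vertices :: "('a, 'b) monoid_scheme \<Rightarrow> ('a, 'c) monoid_scheme \<Rightarrow> 'a set set" where
  "Lambda_vertices P M = {lambda_orbit P M b | b. b \<in> carrier P \<and> card (lambda_orbit P M b) > 1}"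

end

theory Submission
  imports Defs
begin

text \<open>
  The maps \<open>\<lambda>\<^sub>a\<close> are automorphisms of \<open>(A,+)\<close> and \<open>a \<mapsto> \<lambda>\<^sub>a\<close> is an action of \<open>(A,\<circ>)\<close>,
  so every \<open>\<lambda>\<close>-orbit has size dividing \<open>|A|\<close>, and \<open>Fix(A)\<close> is a subgroup of \<open>(A,+)\<close> consisting
  exactly of the points whose orbit is trivial. If \<open>\<Lambda>(A)\<close> has a single vertex \<open>L\<close>, then
  \<open>A = Fix(A) \<union> L\<close> disjointly; as \<open>|Fix(A)|\<close> and \<open>|L|\<close> both divide their sum they are equal, so
  \<open>Fix(A)\<close> has index two in both groups, hence is normal and, being \<open>\<lambda>\<close>-invariant, an ideal.
  For \<open>b \<notin> Fix(A)\<close> the elements \<open>\<lambda>\<^sub>a(b)\<close> and \<open>b\<close> lie in the same coset \<open>L\<close>, so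
  \<open>a * b = \<lambda>\<^sub>a(b) - b \<in> Fix(A)\<close>; conversely \<open>f + b = \<lambda>\<^sub>a(b)\<close> for some \<open>a\<close>, giving \<open>f = a * b\<close>.
  Thus \<open>A\<^sup>2 = Fix(A)\<close>, and \<open>A\<^sup>3 = A * Fix(A) = 0\<close> since \<open>a * f = 0\<close> for fixed \<open>f\<close>.
\<close>

lemma (in group) generate_subgroup_eq:
  assumes "subgroup H G"
  shows "generate G H = H"
  using generate_subgroup_incl[OF subset_refl assms] generate.incl[of _ H G] by blast

lemma (in group) index_two_cosets_complement:
  assumes fin: "finite (carrier G)" and H: "subgroup H G"
    and index: "card (carrier G) = 2 * card H" and x: "x \<in> carrier G" "x \<notin> H"
  shows "H #> x = carrier G - H" and "x <# H = carrier G - H"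
proof -
  have Hc: "H \<subseteq> carrier G" using H subgroup.subset by blast
  have card_compl: "card (carrier G - H) = card H"
    using index card_Diff_subset[OF finite_subset[OF Hc fin] Hc] by simp
  have "H #> x \<subseteq> carrier G - H"
  proof
    fix y assume "y \<in> H #> x"
    then obtain h where h: "h \<in> H" "y = h \<otimes> x" unfolding r_coset_def by blast
    have "h \<otimes> x \<notin> H"
      using h x H by (metis subgroup.mem_carrier subgroup.m_closed subgroup.m_inv_closed inv_solve_left' m_closed)
    thus "y \<in> carrier G - H" using h x Hc by auto
  qed
  moreover have "card (H #> x) = card H"
    using card_rcosets_equal[OF rcosetsI[OF Hc x(1)] Hc] by simp
  ultimately show "H #> x = carrier G - H"
    using card_compl by (simp add: card_subset_eq fin)
  have "x <# H \<subseteq> carrier G - H"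
  proof
    fix y assume "y \<in> x <# H"
    then obtain h where h: "h \<in> H" "y = x \<otimes> h" unfolding l_coset_def by blast
    have "x \<otimes> h \<notin> H"
      using h x H by (metis subgroup.mem_carrier subgroup.m_closed subgroup.m_inv_closed inv_solve_right' m_closed)
    thus "y \<in> carrier G - H" using h x Hc by auto
  qed
  moreover have "card (x <# H) = card H"
    using l_card_cosets_equal[of "x <# H" H] x Hc fin unfolding LCOSETS_def by (metis UN_I singletonI)
  ultimately show "x <# H = carrier G - H"
    using card_compl by (simp add: card_subset_eq fin)
qed

lemma (in group) index_two_normal:
  assumes fin: "finite (carrier G)" and H: "subgroup H G"
    and index: "card (carrier G) = 2 * card H"
  shows "H \<lhd> G"
proof (rule normalI[OF H], intro ballI)
  fix x assume x: "x \<in> carrier G"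
  show "H #> x = x <# H"
  proof (cases "x \<in> H")
    case True
    thus ?thesis using x H coset_join2 coset_join3 by simp
  next
    case False
    thus ?thesis using index_two_cosets_complement[OF fin H index x False] by simp
  qed
qed

locale skew_brace_struct = P: group P + M: group M
  for P :: "('a, 'b) monoid_scheme" and M :: "('a, 'c) monoid_scheme" +
  assumes carrier_M: "carrier M = carrier P"
    and brace_law: "\<And>a b c. \<lbrakk>a \<in> carrier P; b \<in> carrier P; c \<in> carrier P\<rbrakk> \<Longrightarrow>
      a \<otimes>\<^bsub>M\<^esub> (b \<otimes>\<^bsub>P\<^esub> c) = ((a \<otimes>\<^bsub>M\<^esub> b) \<otimes>\<^bsub>P\<^esub> inv\<^bsub>P\<^esub> a) \<otimes>\<^bsub>P\<^esub> (a \<otimes>\<^bsub>M\<^esub> c)"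
begin

abbreviation lam :: "'a \<Rightarrow> 'a \<Rightarrow> 'a" where "lam \<equiv> brace_lambda P M"

abbreviation Fix :: "'a set" where "Fix \<equiv> brace_Fix P M"

lemma M_closed: "\<lbrakk>x \<in> carrier P; y \<in> carrier P\<rbrakk> \<Longrightarrow> x \<otimes>\<^bsub>M\<^esub> y \<in> carrier P"
  using M.m_closed carrier_M by auto

lemma M_inv_closed: "a \<in> carrier P \<Longrightarrow> inv\<^bsub>M\<^esub> a \<in> carrier P"
  using M.inv_closed carrier_M by auto

lemma one_M_eq: "\<one>\<^bsub>M\<^esub> = \<one>\<^bsub>P\<^esub>"
proof -
  have e: "\<one>\<^bsub>M\<^esub> \<in> carrier P" using carrier_M by auto
  have "\<one>\<^bsub>M\<^esub> \<otimes>\<^bsub>M\<^esub> (\<one>\<^bsub>P\<^esub> \<otimes>\<^bsub>P\<^esub> \<one>\<^bsub>P\<^esub>)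
     = ((\<one>\<^bsub>M\<^esub> \<otimes>\<^bsub>M\<^esub> \<one>\<^bsub>P\<^esub>) \<otimes>\<^bsub>P\<^esub> inv\<^bsub>P\<^esub> \<one>\<^bsub>M\<^esub>) \<otimes>\<^bsub>P\<^esub> (\<one>\<^bsub>M\<^esub> \<otimes>\<^bsub>M\<^esub> \<one>\<^bsub>P\<^esub>)"
    using brace_law[OF e P.one_closed P.one_closed] by simp
  hence "\<one>\<^bsub>P\<^esub> = inv\<^bsub>P\<^esub> \<one>\<^bsub>M\<^esub>" using e carrier_M by simp
  thus ?thesis using e by (metis P.inv_inv P.inv_one)
qed

lemma mult_lambda: "\<lbrakk>a \<in> carrier P; b \<in> carrier P\<rbrakk> \<Longrightarrow> a \<otimes>\<^bsub>P\<^esub> lam a b = a \<otimes>\<^bsub>M\<^esub> b"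
  by (simp add: brace_lambda_def M_closed P.m_assoc[symmetric])

lemma lambda_closed: "\<lbrakk>a \<in> carrier P; b \<in> carrier P\<rbrakk> \<Longrightarrow> lam a b \<in> carrier P"
  by (simp add: brace_lambda_def M_closed)

lemma lambda_one_left: "b \<in> carrier P \<Longrightarrow> lam \<one>\<^bsub>P\<^esub> b = b"
  using one_M_eq carrier_M by (metis M.l_one P.inv_one P.l_one brace_lambda_def)

lemma lambda_one: "a \<in> carrier P \<Longrightarrow> lam a \<one>\<^bsub>P\<^esub> = \<one>\<^bsub>P\<^esub>"
  using one_M_eq carrier_M by (metis M.r_one P.l_inv brace_lambda_def)

lemma lambda_mult:
  "\<lbrakk>a \<in> carrier P; b \<in> carrier P; c \<in> carrier P\<rbrakk> \<Longrightarrow> lam a (b \<otimes>\<^bsub>P\<^esub> c) = lam a b \<otimes>\<^bsub>P\<^esub> lam a c"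
  by (simp add: brace_lambda_def brace_law M_closed P.m_assoc)

lemma lambda_inv: "\<lbrakk>a \<in> carrier P; b \<in> carrier P\<rbrakk> \<Longrightarrow> lam a (inv\<^bsub>P\<^esub> b) = inv\<^bsub>P\<^esub> (lam a b)"
  using lambda_mult[of a "inv\<^bsub>P\<^esub> b" b] lambda_one lambda_closed
  by (metis P.inv_closed P.inv_equality P.l_inv)

lemma lambda_comp:
  assumes a: "a \<in> carrier P" and b: "b \<in> carrier P" and c: "c \<in> carrier P"
  shows "lam a (lam b c) = lam (a \<otimes>\<^bsub>M\<^esub> b) c"
proof -
  have "lam a (lam b c) = inv\<^bsub>P\<^esub> (lam a b) \<otimes>\<^bsub>P\<^esub> lam a (b \<otimes>\<^bsub>M\<^esub> c)"
    using a b c by (simp add: brace_lambda_def[of P M b c] lambda_mult lambda_inv M_closed)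
  also have "\<dots> = inv\<^bsub>P\<^esub> (inv\<^bsub>P\<^esub> a \<otimes>\<^bsub>P\<^esub> (a \<otimes>\<^bsub>M\<^esub> b))
      \<otimes>\<^bsub>P\<^esub> (inv\<^bsub>P\<^esub> a \<otimes>\<^bsub>P\<^esub> (a \<otimes>\<^bsub>M\<^esub> (b \<otimes>\<^bsub>M\<^esub> c)))"
    by (simp add: brace_lambda_def)
  also have "\<dots> = inv\<^bsub>P\<^esub> (a \<otimes>\<^bsub>M\<^esub> b) \<otimes>\<^bsub>P\<^esub> ((a \<otimes>\<^bsub>M\<^esub> b) \<otimes>\<^bsub>M\<^esub> c)"
    using a b c carrier_M
    by (simp add: P.inv_mult_group M_closed P.m_assoc M.m_assoc, simp add: M_closed flip: P.m_assoc)
  finally show ?thesis by (simp add: brace_lambda_def)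
qed

lemma lambda_M_inv_cancel: "\<lbrakk>a \<in> carrier P; c \<in> carrier P\<rbrakk> \<Longrightarrow> lam (inv\<^bsub>M\<^esub> a) (lam a c) = c"
  using lambda_comp[OF M_inv_closed] carrier_M one_M_eq lambda_one_left by auto

lemma bij_betw_lambda: "a \<in> carrier P \<Longrightarrow> bij_betw (lam a) (carrier P) (carrier P)"
proof (rule bij_betw_byWitness[where f' = "lam (inv\<^bsub>M\<^esub> a)"])
  assume a: "a \<in> carrier P"
  show "\<forall>x\<in>carrier P. lam (inv\<^bsub>M\<^esub> a) (lam a x) = x"
    using lambda_M_inv_cancel a by blast
  show "\<forall>y\<in>carrier P. lam a (lam (inv\<^bsub>M\<^esub> a) y) = y"
    using lambda_M_inv_cancel[OF M_inv_closed[OF a]] a carrier_M by simp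
  show "lam a ` carrier P \<subseteq> carrier P" "lam (inv\<^bsub>M\<^esub> a) ` carrier P \<subseteq> carrier P"
    using lambda_closed M_inv_closed a by auto
qed

lemma lambda_group_action: "group_action M (carrier P) (\<lambda>a. restrict (lam a) (carrier P))"
  unfolding group_action_def group_hom_def group_hom_axioms_def
proof (intro conjI)
  show "group M" "group (BijGroup (carrier P))"
    by (rule M.is_group, rule group_BijGroup)
  show "(\<lambda>a. restrict (lam a) (carrier P)) \<in> hom M (BijGroup (carrier P))"
  proof (rule homI)
    fix x assume "x \<in> carrier M"
    thus "restrict (lam x) (carrier P) \<in> carrier (BijGroup (carrier P))"
      using bij_betw_lambda carrier_M by (simp add: BijGroup_def Bij_def bij_betw_restrict_eq)
  next
    fix x y assume "x \<in> carrier M" "y \<in> carrier M"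
    thus "restrict (lam (x \<otimes>\<^bsub>M\<^esub> y)) (carrier P)
        = restrict (lam x) (carrier P) \<otimes>\<^bsub>BijGroup (carrier P)\<^esub> restrict (lam y) (carrier P)"
      using bij_betw_lambda carrier_M
      by (auto simp: BijGroup_def Bij_def bij_betw_restrict_eq compose_def lambda_comp lambda_closed
          intro!: ext)
  qed
qed

lemma card_lambda_orbit_dvd:
  assumes b: "b \<in> carrier P"
  shows "card (lambda_orbit P M b) dvd card (carrier P)"
proof -
  interpret group_action M "carrier P" "\<lambda>a. restrict (lam a) (carrier P)"
    by (rule lambda_group_action)
  have "orbit M (\<lambda>a. restrict (lam a) (carrier P)) b = lambda_orbit P M b"
    using b carrier_M by (auto simp: orbit_def lambda_orbit_def)
  thus ?thesis
    using orbit_stabilizer_theorem[OF b] carrier_M by (metis dvd_triv_left order_def)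
qed

lemma in_lambda_orbit: "b \<in> carrier P \<Longrightarrow> b \<in> lambda_orbit P M b"
  unfolding lambda_orbit_def using lambda_one_left by (metis P.one_closed image_eqI)

lemma Fix_subset: "Fix \<subseteq> carrier P"
  by (auto simp: brace_Fix_def)

lemma lambda_Fix: "\<lbrakk>x \<in> carrier P; f \<in> Fix\<rbrakk> \<Longrightarrow> lam x f = f"
  by (auto simp: brace_Fix_def)

lemma subgroup_Fix: "subgroup Fix P"
proof (rule P.subgroupI)
  show "Fix \<subseteq> carrier P" by (rule Fix_subset)
  show "Fix \<noteq> {}" using lambda_one by (auto simp: brace_Fix_def)
  fix a b assume "a \<in> Fix" "b \<in> Fix"
  thus "inv\<^bsub>P\<^esub> a \<in> Fix" "a \<otimes>\<^bsub>P\<^esub> b \<in> Fix"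
    by (auto simp: brace_Fix_def lambda_inv lambda_mult)
qed

lemma M_mult_Fix: "\<lbrakk>a \<in> carrier P; f \<in> Fix\<rbrakk> \<Longrightarrow> a \<otimes>\<^bsub>M\<^esub> f = a \<otimes>\<^bsub>P\<^esub> f"
  using mult_lambda lambda_Fix Fix_subset by (metis subsetD)

lemma M_inv_Fix:
  assumes f: "f \<in> Fix"
  shows "inv\<^bsub>M\<^esub> f = inv\<^bsub>P\<^esub> f"
proof -
  have fc: "f \<in> carrier P" using f Fix_subset by blast
  have "f \<otimes>\<^bsub>P\<^esub> lam f (inv\<^bsub>M\<^esub> f) = \<one>\<^bsub>P\<^esub>"
    using mult_lambda[OF fc M_inv_closed[OF fc]] fc carrier_M one_M_eq by simp
  hence "lam f (inv\<^bsub>M\<^esub> f) = lam f (inv\<^bsub>P\<^esub> f)"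
    using fc lambda_closed[OF fc M_inv_closed[OF fc]] lambda_Fix[OF fc] subgroup.m_inv_closed[OF subgroup_Fix f]
    by (metis P.inv_equality P.inv_inv P.inv_closed)
  thus ?thesis
    using bij_betw_lambda[OF fc] fc M_inv_closed[OF fc] by (auto simp: bij_betw_def inj_on_def)
qed

lemma subgroup_Fix_M: "subgroup Fix M"
proof (rule M.subgroupI)
  show "Fix \<subseteq> carrier M" using Fix_subset carrier_M by simp
  show "Fix \<noteq> {}" using subgroup.one_closed[OF subgroup_Fix] by blast
  fix a b assume a: "a \<in> Fix" and b: "b \<in> Fix"
  show "inv\<^bsub>M\<^esub> a \<in> Fix" using M_inv_Fix[OF a] subgroup.m_inv_closed[OF subgroup_Fix a] by simp
  show "a \<otimes>\<^bsub>M\<^esub> b \<in> Fix"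
    using M_mult_Fix b a Fix_subset subgroup.m_closed[OF subgroup_Fix a b] by auto
qed

lemma lambda_notin_Fix: "\<lbrakk>a \<in> carrier P; b \<in> carrier P; b \<notin> Fix\<rbrakk> \<Longrightarrow> lam a b \<notin> Fix"
  using lambda_M_inv_cancel lambda_Fix M_inv_closed by metis

lemma one_less_card_lambda_orbit_iff:
  assumes fin: "finite (carrier P)" and b: "b \<in> carrier P"
  shows "1 < card (lambda_orbit P M b) \<longleftrightarrow> b \<notin> Fix"
proof
  assume "1 < card (lambda_orbit P M b)"
  moreover have "b \<in> Fix \<Longrightarrow> lambda_orbit P M b = {b}"
    using in_lambda_orbit[OF b] by (auto simp: lambda_orbit_def lambda_Fix)
  ultimately show "b \<notin> Fix" by auto
next
  assume "b \<notin> Fix"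
  then obtain x where x: "x \<in> carrier P" and moved: "lam x b \<noteq> b"
    using b by (auto simp: brace_Fix_def)
  have "{b, lam x b} \<subseteq> lambda_orbit P M b"
    using in_lambda_orbit[OF b] x by (auto simp: lambda_orbit_def)
  moreover have "finite (lambda_orbit P M b)"
    using fin by (simp add: lambda_orbit_def)
  ultimately have "card {b, lam x b} \<le> card (lambda_orbit P M b)"
    by (rule card_mono[rotated])
  thus "1 < card (lambda_orbit P M b)"
    using moved by simp
qed

end

locale skew_brace_one_vertex = skew_brace_struct +
  assumes finite_carrier: "finite (carrier P)"
    and one_vertex: "card (Lambda_vertices P M) = 1"
begin

lemma Fix_complement_lambda_orbit: "\<exists>b\<in>carrier P. lambda_orbit P M b = carrier P - Fix"
proof -
  obtain L where L: "Lambda_vertices P M = {L}"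
    using one_vertex card_1_singletonE by blast
  then obtain b where b: "b \<in> carrier P" "1 < card (lambda_orbit P M b)" "L = lambda_orbit P M b"
    unfolding Lambda_vertices_def by blast
  have "lambda_orbit P M b \<subseteq> carrier P - Fix"
    using b lambda_notin_Fix lambda_closed one_less_card_lambda_orbit_iff[OF finite_carrier]
    by (auto simp: lambda_orbit_def)
  moreover have "carrier P - Fix \<subseteq> lambda_orbit P M b"
  proof
    fix c assume c: "c \<in> carrier P - Fix"
    hence "lambda_orbit P M c \<in> Lambda_vertices P M"
      using one_less_card_lambda_orbit_iff[OF finite_carrier] by (auto simp: Lambda_vertices_def)
    thus "c \<in> lambda_orbit P M b"
      using L b(3) in_lambda_orbit c by auto
  qed
  ultimately show ?thesis using b(1) by blast
qed

lemma card_carrier_eq_twice_card_Fix: "card (carrier P) = 2 * card Fix"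
proof -
  obtain b where b: "b \<in> carrier P" and orbit: "lambda_orbit P M b = carrier P - Fix"
    using Fix_complement_lambda_orbit by blast
  have split: "card (carrier P) = card Fix + card (carrier P - Fix)"
    using card_Diff_subset[OF finite_subset[OF Fix_subset finite_carrier] Fix_subset]
      card_mono[OF finite_carrier Fix_subset] by simp
  have "card Fix dvd card (carrier P)"
    using P.lagrange[OF subgroup_Fix] by (metis dvd_triv_right order_def)
  moreover have "card (carrier P - Fix) dvd card (carrier P)"
    using card_lambda_orbit_dvd[OF b] orbit by simp
  ultimately have "card Fix = card (carrier P - Fix)"
    using split by (metis dvd_add_right_iff dvd_add_left_iff dvd_refl dvd_antisym)
  thus ?thesis using split by simp
qed

lemma card_rcosets_Fix: "card (rcosets\<^bsub>P\<^esub> Fix) = 2"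
proof -
  have "card (rcosets\<^bsub>P\<^esub> Fix) * card Fix = 2 * card Fix"
    using P.lagrange[OF subgroup_Fix] card_carrier_eq_twice_card_Fix by (simp add: order_def)
  moreover have "0 < card Fix"
    using finite_subset[OF Fix_subset finite_carrier] subgroup.one_closed[OF subgroup_Fix]
    by (auto simp: card_gt_0_iff)
  ultimately show ?thesis by simp
qed

lemma brace_ideal_Fix: "brace_ideal Fix P M"
proof -
  have "Fix \<lhd> P"
    using P.index_two_normal[OF finite_carrier subgroup_Fix card_carrier_eq_twice_card_Fix] .
  moreover have "Fix \<lhd> M"
    using M.index_two_normal[OF _ subgroup_Fix_M] finite_carrier card_carrier_eq_twice_card_Fix carrier_M
    by simp
  ultimately show ?thesis
    unfolding brace_ideal_def using lambda_Fix by auto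
qed

lemma brace_star_in_Fix:
  assumes a: "a \<in> carrier P" and b: "b \<in> carrier P"
  shows "brace_star P M a b \<in> Fix"
proof (cases "b \<in> Fix")
  case True
  thus ?thesis using a subgroup.one_closed[OF subgroup_Fix] Fix_subset lambda_Fix
    by (auto simp: brace_star_def)
next
  case False
  have "lam a b \<in> Fix #>\<^bsub>P\<^esub> b"
    using P.index_two_cosets_complement(1)[OF finite_carrier subgroup_Fix
        card_carrier_eq_twice_card_Fix b False] lambda_closed[OF a b] lambda_notin_Fix[OF a b False]
    by simp
  thus ?thesis
    unfolding brace_star_def using subgroup.rcos_module_imp[OF subgroup_Fix P.is_group b] by simp
qed

lemma brace_star_Fix: "\<lbrakk>a \<in> carrier P; f \<in> Fix\<rbrakk> \<Longrightarrow> brace_star P M a f = \<one>\<^bsub>P\<^esub>"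
  using Fix_subset lambda_Fix by (auto simp: brace_star_def)

lemma Fix_subset_brace_star: "Fix \<subseteq> (\<lambda>(a, b). brace_star P M a b) ` (carrier P \<times> carrier P)"
proof
  fix f assume f: "f \<in> Fix"
  obtain b where b: "b \<in> carrier P" and orbit: "lambda_orbit P M b = carrier P - Fix"
    using Fix_complement_lambda_orbit by blast
  have fc: "f \<in> carrier P" using f Fix_subset by blast
  have "b \<notin> Fix" using in_lambda_orbit[OF b] orbit by blast
  moreover have "b = inv\<^bsub>P\<^esub> f \<otimes>\<^bsub>P\<^esub> (f \<otimes>\<^bsub>P\<^esub> b)"
    using fc b by (simp add: P.m_assoc[symmetric])
  ultimately have "f \<otimes>\<^bsub>P\<^esub> b \<in> carrier P - Fix"
    using f fc b subgroup_Fix by (metis Diff_iff P.m_closed subgroup.m_closed subgroup.m_inv_closed)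
  then obtain a where a: "a \<in> carrier P" and fb: "f \<otimes>\<^bsub>P\<^esub> b = lam a b"
    unfolding orbit[symmetric] lambda_orbit_def by blast
  have "brace_star P M a b = f"
    unfolding brace_star_def using fb[symmetric] fc b by (simp add: P.m_assoc)
  thus "f \<in> (\<lambda>(a, b). brace_star P M a b) ` (carrier P \<times> carrier P)"
    using a b by force
qed

lemma brace_pow_2: "brace_pow P M 2 = Fix"
proof -
  have "(\<lambda>(a, b). brace_star P M a b) ` (carrier P \<times> carrier P) = Fix"
    using brace_star_in_Fix Fix_subset_brace_star by auto
  thus ?thesis
    by (simp add: numeral_2_eq_2 brace_star_set_def P.generate_subgroup_eq[OF subgroup_Fix])
qed

lemma brace_pow_3: "brace_pow P M 3 = {\<one>\<^bsub>P\<^esub>}"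
proof -
  have "(\<lambda>(a, b). brace_star P M a b) ` (carrier P \<times> Fix) = {\<one>\<^bsub>P\<^esub>}"
  proof
    show "(\<lambda>(a, b). brace_star P M a b) ` (carrier P \<times> Fix) \<subseteq> {\<one>\<^bsub>P\<^esub>}"
      using brace_star_Fix by auto
    have "brace_star P M \<one>\<^bsub>P\<^esub> \<one>\<^bsub>P\<^esub> = \<one>\<^bsub>P\<^esub>"
      using brace_star_Fix subgroup.one_closed[OF subgroup_Fix] by blast
    thus "{\<one>\<^bsub>P\<^esub>} \<subseteq> (\<lambda>(a, b). brace_star P M a b) ` (carrier P \<times> Fix)"
      using subgroup.one_closed[OF subgroup_Fix]
      by (intro subsetI rev_image_eqI[of "(\<one>\<^bsub>P\<^esub>, \<one>\<^bsub>P\<^esub>)"]) auto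
  qed
  moreover have "brace_pow P M 3 = brace_star_set P M (carrier P) (brace_pow P M 2)"
    by (simp add: numeral_3_eq_3 numeral_2_eq_2)
  ultimately show ?thesis
    by (simp add: brace_pow_2 brace_star_set_def P.generate_subgroup_eq[OF P.triv_subgroup])
qed

end

theorem mainTheorem12:
  fixes P :: "('a, 'b) monoid_scheme" and M :: "('a, 'c) monoid_scheme"
  assumes "skew_brace P M"
    and "finite (carrier P)"
    and "card (Lambda_vertices P M) = 1"
  shows "brace_pow P M 3 = {\<one>\<^bsub>P\<^esub>}
    \<and> brace_ideal (brace_Fix P M) P M
    \<and> card (rcosets\<^bsub>P\<^esub> (brace_Fix P M)) = 2
    \<and> brace_pow P M 2 = brace_Fix P M"
proof -
  have "skew_brace_struct P M"
    using assms(1) unfolding skew_brace_def skew_brace_struct_def skew_brace_struct_axioms_def by auto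
  then interpret skew_brace_one_vertex P M
    using assms(2,3) by (simp add: skew_brace_one_vertex_def skew_brace_one_vertex_axioms_def)
  show ?thesis
    using brace_pow_3 brace_ideal_Fix card_rcosets_Fix brace_pow_2 by blast
qed

end
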